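(* Let $p,q,r\in(0,1)$ with $p+q+r=1$. Let $X_1,\eta_2,\eta_3,\ldots$ be independent random variables, each taking the values $1,-1,0$ with probabilities $p,q,r$ respectively. Set $X_{n+1}=\eta_{n+1}X_1$ for $n\ge1$ and $S_n=\sum_{k=1}^nX_k$. Then, as $n\to\infty$, $S_n/n$ converges in distribution to a random variable taking the value $p-q$ with probability $p$, the value $0$ with probability $r$, and the value $-(p-q)$ with probability $q$. Moreover, $E(S_n/n)\to(p-q)^2$ and $\operatorname{Var}(S_n/n)\to(p-q)^2\big(p+q-(p-q)^2\big)$ as $n\to\infty$.
   Context: This is the elephant random walk with delays in which the elephant remembers only the first step: each later step repeats the first step with probability $p$, reverses it with probability $q$, or equals $0$ with probability $r$. *)

theory Defs
  imports "HOL-Probability.Probability"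
begin

definition erw_step :: "('a \<Rightarrow> real) \<Rightarrow> (nat \<Rightarrow> 'a \<Rightarrow> real) \<Rightarrow> nat \<Rightarrow> 'a \<Rightarrow> real" where
  "erw_step X1 \<eta> n = (if n = 1 then X1 else (\<lambda>\<omega>. \<eta> n \<omega> * X1 \<omega>))"

definition erw_sum :: "('a \<Rightarrow> real) \<Rightarrow> (nat \<Rightarrow> 'a \<Rightarrow> real) \<Rightarrow> nat \<Rightarrow> 'a \<Rightarrow> real" where
  "erw_sum X1 \<eta> n = (\<lambda>\<omega>. \<Sum>k=1..n. erw_step X1 \<eta> k \<omega>)"

definition erw_limit_law :: "real \<Rightarrow> real \<Rightarrow> real \<Rightarrow> real measure" where
  "erw_limit_law p q r =
     distr (measure_pmf (pmf_of_list [(p - q, p), (0, r), (-(p - q), q)])) borel (\<lambda>x. x)"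

end

theory Submission
  imports Defs "HOL-Real_Asymp.Real_Asymp"
begin

(* Every step is a multiple of the first one: S_n = X_1 (1 + eta_2 + ... + eta_n), so
   S_n / n = X_1 R_n with R_n = sign_mean n = (1 + eta_2 + ... + eta_n) / n independent of X_1.
   The first two moments of R_n are explicit and show that R_n -> p - q in mean square.
   Hence S_n / n -> (p - q) X_1 in mean square, which implies convergence in distribution to the
   law of (p - q) X_1; by independence, the mean and the variance of S_n / n factor into
   E X_1 = p - q, E X_1^2 = p + q and the moments of R_n. *)

context prob_space
begin

lemma AE_three_valued:
  fixes V :: "'a \<Rightarrow> real"
  assumes [measurable]: "random_variable borel V"
    and "prob {\<omega> \<in> space M. V \<omega> = 1} + prob {\<omega> \<in> space M. V \<omega> = -1}
      + prob {\<omega> \<in> space M. V \<omega> = 0} = 1"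
  shows "AE \<omega> in M. V \<omega> \<in> {-1, 0, 1}"
proof -
  let ?E = "\<lambda>c. {\<omega> \<in> space M. V \<omega> = c}"
  have "prob (?E 1 \<union> ?E (-1) \<union> ?E 0) = prob (?E 1) + prob (?E (-1)) + prob (?E 0)"
    by (subst finite_measure_Union, auto)+
  then have "AE \<omega> in M. \<omega> \<in> ?E 1 \<union> ?E (-1) \<union> ?E 0"
    using assms(2) by (intro AE_prob_1) simp
  then show ?thesis
    by eventually_elim auto
qed

lemma expectation_three_valued:
  fixes V :: "'a \<Rightarrow> real" and f :: "real \<Rightarrow> real"
  assumes [measurable]: "random_variable borel V" "f \<in> borel_measurable borel"
    and three_valued: "AE \<omega> in M. V \<omega> \<in> {-1, 0, 1}"
  shows "expectation (\<lambda>\<omega>. f (V \<omega>)) = f 1 * prob {\<omega> \<in> space M. V \<omega> = 1}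
    + f (-1) * prob {\<omega> \<in> space M. V \<omega> = -1} + f 0 * prob {\<omega> \<in> space M. V \<omega> = 0}"
proof -
  let ?E = "\<lambda>c. {\<omega> \<in> space M. V \<omega> = c}"
  have "expectation (\<lambda>\<omega>. f (V \<omega>)) = expectation (\<lambda>\<omega>. f 1 * indicator (?E 1) \<omega>
      + f (-1) * indicator (?E (-1)) \<omega> + f 0 * indicator (?E 0) \<omega>)"
    by (rule integral_cong_AE) (use three_valued in \<open>auto elim!: eventually_mono simp: indicator_def\<close>)
  also have "\<dots> = f 1 * prob (?E 1) + f (-1) * prob (?E (-1)) + f 0 * prob (?E 0)"
    by (simp add: emeasure_eq_measure)
  finally show ?thesis .
qed

lemma integrable_continuous_comp_bounded:
  fixes V :: "'a \<Rightarrow> real" and g :: "real \<Rightarrow> real"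
  assumes "random_variable borel V" "AE \<omega> in M. \<bar>V \<omega>\<bar> \<le> c" "continuous_on UNIV g"
  shows "integrable M (\<lambda>\<omega>. g (V \<omega>))"
proof -
  have "compact (g ` {-c..c})"
    by (rule compact_continuous_image[OF continuous_on_subset[OF assms(3)]]) auto
  then obtain B where B: "\<And>x. x \<in> {-c..c} \<Longrightarrow> \<bar>g x\<bar> \<le> B"
    by (meson compact_imp_bounded bounded_real image_eqI)
  show ?thesis
  proof (rule integrable_const_bound[where B = B])
    show "AE \<omega> in M. norm (g (V \<omega>)) \<le> B"
      using assms(2)
    proof eventually_elim
      case (elim \<omega>)
      then have "V \<omega> \<in> {-c..c}"
        by (auto simp: abs_le_iff)
      then show ?case
        using B by simp
    qed
  qed (use assms borel_measurable_continuous_on in auto)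
qed

lemma expectation_sum_square_indep:
  fixes Y :: "'i \<Rightarrow> 'a \<Rightarrow> real"
  assumes indep: "indep_vars (\<lambda>_. borel) Y J" and "finite J"
    and square_integrable: "\<And>k. k \<in> J \<Longrightarrow> integrable M (\<lambda>\<omega>. Y k \<omega> ^ 2)"
    and mean: "\<And>k. k \<in> J \<Longrightarrow> expectation (Y k) = \<mu>"
    and second_moment: "\<And>k. k \<in> J \<Longrightarrow> expectation (\<lambda>\<omega>. Y k \<omega> ^ 2) = m"
  shows "expectation (\<lambda>\<omega>. (\<Sum>k\<in>J. Y k \<omega>)^2) = real (card J) * m + real (card J) * (real (card J) - 1) * \<mu>^2"
proof -
  have integrable: "integrable M (Y k)" if "k \<in> J" for k
    using indep that square_integrable[OF that]
    by (auto simp: indep_vars_def intro: square_integrable_imp_integrable)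
  have product: "integrable M (\<lambda>\<omega>. Y j \<omega> * Y k \<omega>) \<and>
      expectation (\<lambda>\<omega>. Y j \<omega> * Y k \<omega>) = (if j = k then m else \<mu>^2)" if "j \<in> J" "k \<in> J" for j k
  proof (cases "j = k")
    case True
    then show ?thesis
      using that square_integrable second_moment by (simp add: power2_eq_square)
  next
    case False
    have "indep_var borel (Y j) borel (\<lambda>\<omega>. \<Sum>i\<in>{k}. Y i \<omega>)"
      using False that by (intro indep_vars_sum indep_vars_subset[OF indep]) auto
    then have "indep_var borel (Y j) borel (Y k)"
      by simp
    then show ?thesis
      using False that integrable mean
      by (simp add: indep_var_lebesgue_integral indep_var_integrable power2_eq_square)
  qed
  have row: "(\<Sum>k\<in>J. if j = k then m else \<mu>^2) = m + (real (card J) - 1) * \<mu>^2"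
    if "j \<in> J" for j
  proof -
    have "(\<Sum>k\<in>J - {j}. if j = k then m else \<mu>^2) = (\<Sum>k\<in>J - {j}. \<mu>^2)"
      by (rule sum.cong) auto
    moreover have "1 \<le> card J"
      using that \<open>finite J\<close> by (cases "card J") auto
    ultimately show ?thesis
      using that \<open>finite J\<close> by (simp add: sum.remove[of J j] card_Diff_singleton of_nat_diff)
  qed
  have "expectation (\<lambda>\<omega>. (\<Sum>k\<in>J. Y k \<omega>)^2) = expectation (\<lambda>\<omega>. \<Sum>j\<in>J. \<Sum>k\<in>J. Y j \<omega> * Y k \<omega>)"
    by (simp add: power2_eq_square sum_product)
  also have "\<dots> = (\<Sum>j\<in>J. \<Sum>k\<in>J. if j = k then m else \<mu>^2)"
    using product by (simp add: integrable_sum)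
  also have "\<dots> = real (card J) * m + real (card J) * (real (card J) - 1) * \<mu>^2"
    by (simp add: row algebra_simps)
  finally show ?thesis .
qed

lemma cdf_distr:
  fixes V :: "'a \<Rightarrow> real"
  assumes "random_variable borel V"
  shows "cdf (distr M borel V) x = prob {\<omega> \<in> space M. V \<omega> \<le> x}"
proof -
  have "V -` {..x} \<inter> space M = {\<omega> \<in> space M. V \<omega> \<le> x}"
    by auto
  then show ?thesis
    using assms by (simp add: cdf_def2 measure_distr)
qed

lemma prob_le_prob_add_prob_dist_ge:
  fixes U V :: "'a \<Rightarrow> real"
  assumes [measurable]: "random_variable borel U" "random_variable borel V"
  shows "prob {\<omega> \<in> space M. U \<omega> \<le> x}
    \<le> prob {\<omega> \<in> space M. V \<omega> \<le> x + \<delta>} + prob {\<omega> \<in> space M. \<delta> \<le> \<bar>U \<omega> - V \<omega>\<bar>}"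
proof -
  have "prob {\<omega> \<in> space M. U \<omega> \<le> x}
      \<le> prob ({\<omega> \<in> space M. V \<omega> \<le> x + \<delta>} \<union> {\<omega> \<in> space M. \<delta> \<le> \<bar>U \<omega> - V \<omega>\<bar>})"
    by (rule finite_measure_mono) auto
  also have "\<dots> \<le> prob {\<omega> \<in> space M. V \<omega> \<le> x + \<delta>} + prob {\<omega> \<in> space M. \<delta> \<le> \<bar>U \<omega> - V \<omega>\<bar>}"
    by (rule measure_Un_le) auto
  finally show ?thesis .
qed

lemma abs_prob_le_sub_prob_le:
  fixes U V :: "'a \<Rightarrow> real"
  assumes "random_variable borel U" "random_variable borel V"
  shows "\<bar>prob {\<omega> \<in> space M. U \<omega> \<le> x} - prob {\<omega> \<in> space M. V \<omega> \<le> x}\<bar>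
    \<le> \<bar>prob {\<omega> \<in> space M. V \<omega> \<le> x + \<delta>} - prob {\<omega> \<in> space M. V \<omega> \<le> x}\<bar>
      + \<bar>prob {\<omega> \<in> space M. V \<omega> \<le> x - \<delta>} - prob {\<omega> \<in> space M. V \<omega> \<le> x}\<bar>
      + prob {\<omega> \<in> space M. \<delta> \<le> \<bar>U \<omega> - V \<omega>\<bar>}"
proof -
  have "prob {\<omega> \<in> space M. V \<omega> \<le> x - \<delta>}
      \<le> prob {\<omega> \<in> space M. U \<omega> \<le> x} + prob {\<omega> \<in> space M. \<delta> \<le> \<bar>U \<omega> - V \<omega>\<bar>}"
    using prob_le_prob_add_prob_dist_ge[OF assms(2,1), of "x - \<delta>" \<delta>] by (simp add: abs_minus_commute)
  then show ?thesis
    using prob_le_prob_add_prob_dist_ge[OF assms, of x \<delta>] by arith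
qed

lemma L2_conv_imp_tendsto_prob_dist_ge:
  fixes U :: "nat \<Rightarrow> 'a \<Rightarrow> real" and V :: "'a \<Rightarrow> real"
  assumes [measurable]: "\<And>n. random_variable borel (U n)" "random_variable borel V"
    and integrable: "\<And>n. integrable M (\<lambda>\<omega>. (U n \<omega> - V \<omega>)^2)"
    and L2: "(\<lambda>n. expectation (\<lambda>\<omega>. (U n \<omega> - V \<omega>)^2)) \<longlonglongrightarrow> 0"
    and "0 < \<delta>"
  shows "(\<lambda>n. prob {\<omega> \<in> space M. \<delta> \<le> \<bar>U n \<omega> - V \<omega>\<bar>}) \<longlonglongrightarrow> 0"
proof (rule tendsto_sandwich[OF _ _ tendsto_const tendsto_divide_zero[OF L2, of "\<delta>^2"]])
  have "prob {\<omega> \<in> space M. \<delta> \<le> \<bar>U n \<omega> - V \<omega>\<bar>} \<le> expectation (\<lambda>\<omega>. (U n \<omega> - V \<omega>)^2) / \<delta>^2" for n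
  proof -
    have "{\<omega> \<in> space M. \<delta> \<le> \<bar>U n \<omega> - V \<omega>\<bar>} = {\<omega> \<in> space M. \<delta>^2 \<le> (U n \<omega> - V \<omega>)^2}"
      using \<open>0 < \<delta>\<close> abs_le_square_iff[of \<delta>] by auto
    also have "prob \<dots> \<le> expectation (\<lambda>\<omega>. (U n \<omega> - V \<omega>)^2) / \<delta>^2"
      by (rule integral_Markov_inequality_measure[OF integrable sets.top]) (use \<open>0 < \<delta>\<close> in auto)
    finally show ?thesis .
  qed
  then show "\<forall>\<^sub>F n in sequentially. prob {\<omega> \<in> space M. \<delta> \<le> \<bar>U n \<omega> - V \<omega>\<bar>}
      \<le> expectation (\<lambda>\<omega>. (U n \<omega> - V \<omega>)^2) / \<delta>^2"
    by simp
qed simp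

theorem L2_conv_imp_weak_conv:
  fixes U :: "nat \<Rightarrow> 'a \<Rightarrow> real" and V :: "'a \<Rightarrow> real"
  assumes rv: "\<And>n. random_variable borel (U n)" "random_variable borel V"
    and integrable: "\<And>n. integrable M (\<lambda>\<omega>. (U n \<omega> - V \<omega>)^2)"
    and L2: "(\<lambda>n. expectation (\<lambda>\<omega>. (U n \<omega> - V \<omega>)^2)) \<longlonglongrightarrow> 0"
  shows "weak_conv_m (\<lambda>n. distr M borel (U n)) (distr M borel V)"
  unfolding weak_conv_m_def weak_conv_def
proof (intro allI impI)
  define F where "F y = prob {\<omega> \<in> space M. V \<omega> \<le> y}" for y
  fix x
  assume "isCont (cdf (distr M borel V)) x"
  moreover have "cdf (distr M borel V) = F"
    using cdf_distr[OF rv(2)] by (simp add: F_def fun_eq_iff)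
  ultimately have "isCont F x"
    by simp
  show "(\<lambda>n. cdf (distr M borel (U n)) x) \<longlonglongrightarrow> cdf (distr M borel V) x"
    unfolding cdf_distr[OF rv(1)] cdf_distr[OF rv(2)] F_def[symmetric]
  proof (rule tendstoI)
    fix e :: real
    assume "0 < e"
    then obtain s where "0 < s" and s: "\<And>y. dist y x < s \<Longrightarrow> dist (F y) (F x) < e / 4"
      using \<open>isCont F x\<close> unfolding continuous_at_eps_delta by (metis zero_less_divide_iff zero_less_numeral)
    define \<delta> where "\<delta> = s / 2"
    have "0 < \<delta>" and close: "\<bar>F (x + \<delta>) - F x\<bar> + \<bar>F (x - \<delta>) - F x\<bar> < e / 2"
      using \<open>0 < s\<close> s[of "x + \<delta>"] s[of "x - \<delta>"] by (auto simp: \<delta>_def dist_real_def)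
    have "\<forall>\<^sub>F n in sequentially. prob {\<omega> \<in> space M. \<delta> \<le> \<bar>U n \<omega> - V \<omega>\<bar>} < e / 2"
      by (rule order_tendstoD(2)[OF L2_conv_imp_tendsto_prob_dist_ge[OF rv integrable L2 \<open>0 < \<delta>\<close>]])
        (use \<open>0 < e\<close> in simp)
    then show "\<forall>\<^sub>F n in sequentially. dist (prob {\<omega> \<in> space M. U n \<omega> \<le> x}) (F x) < e"
    proof eventually_elim
      case (elim n)
      then show ?case
        using abs_prob_le_sub_prob_le[OF rv(1)[of n] rv(2), of x \<delta>] close
        unfolding F_def dist_real_def by linarith
    qed
  qed
qed

end

locale erw_first_step = prob_space M
  for M :: "'a measure" and X1 :: "'a \<Rightarrow> real" and \<eta> :: "nat \<Rightarrow> 'a \<Rightarrow> real" and p q r :: real +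
  assumes weights_sum: "p + q + r = 1"
    and indep: "indep_vars (\<lambda>_. borel) (\<lambda>i. if i = 1 then X1 else \<eta> i) {1..}"
    and X1_law: "prob {\<omega> \<in> space M. X1 \<omega> = 1} = p" "prob {\<omega> \<in> space M. X1 \<omega> = -1} = q"
      "prob {\<omega> \<in> space M. X1 \<omega> = 0} = r"
    and eta_law: "\<And>n. n \<ge> 2 \<Longrightarrow> prob {\<omega> \<in> space M. \<eta> n \<omega> = 1} = p"
      "\<And>n. n \<ge> 2 \<Longrightarrow> prob {\<omega> \<in> space M. \<eta> n \<omega> = -1} = q"
      "\<And>n. n \<ge> 2 \<Longrightarrow> prob {\<omega> \<in> space M. \<eta> n \<omega> = 0} = r"
begin

definition \<xi> :: "nat \<Rightarrow> 'a \<Rightarrow> real" where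
  "\<xi> i = (if i = 1 then X1 else \<eta> i)"

lemma indep_\<xi>: "indep_vars (\<lambda>_. borel) \<xi> {1..}"
  using indep by (simp add: \<xi>_def[abs_def])

lemma random_variable_\<xi>: "1 \<le> i \<Longrightarrow> random_variable borel (\<xi> i)"
  using indep_\<xi> by (auto simp: indep_vars_def)

lemma law_\<xi>:
  assumes "1 \<le> i"
  shows "prob {\<omega> \<in> space M. \<xi> i \<omega> = 1} = p" "prob {\<omega> \<in> space M. \<xi> i \<omega> = -1} = q"
    "prob {\<omega> \<in> space M. \<xi> i \<omega> = 0} = r"
  using assms X1_law eta_law[of i] by (auto simp: \<xi>_def)

lemma AE_\<xi>: "1 \<le> i \<Longrightarrow> AE \<omega> in M. \<xi> i \<omega> \<in> {-1, 0, 1}"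
  using AE_three_valued[OF random_variable_\<xi>] law_\<xi> weights_sum by simp

lemma AE_abs_\<xi>_le_1: "1 \<le> i \<Longrightarrow> AE \<omega> in M. \<bar>\<xi> i \<omega>\<bar> \<le> 1"
  by (rule eventually_mono[OF AE_\<xi>]) auto

lemma expectation_\<xi>:
  assumes "1 \<le> i" "f \<in> borel_measurable borel"
  shows "expectation (\<lambda>\<omega>. f (\<xi> i \<omega>)) = f 1 * p + f (-1) * q + f 0 * r"
  using expectation_three_valued[OF random_variable_\<xi> assms(2) AE_\<xi>] law_\<xi> assms(1) by simp

lemma random_variable_X1 [measurable]: "random_variable borel X1"
  using random_variable_\<xi>[of 1] by (simp add: \<xi>_def)

lemma AE_abs_X1_le_1: "AE \<omega> in M. \<bar>X1 \<omega>\<bar> \<le> 1"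
  using AE_abs_\<xi>_le_1[of 1] by (simp add: \<xi>_def)

lemma expectation_X1: "expectation X1 = p - q"
  using expectation_\<xi>[of 1 "\<lambda>x. x"] by (simp add: \<xi>_def)

lemma expectation_X1_sq: "expectation (\<lambda>\<omega>. X1 \<omega> ^ 2) = p + q"
  using expectation_\<xi>[of 1 "\<lambda>x. x ^ 2"] by (simp add: \<xi>_def)

lemma random_variable_sum_\<xi>: "J \<subseteq> {1..} \<Longrightarrow> random_variable borel (\<lambda>\<omega>. \<Sum>k\<in>J. \<xi> k \<omega>)"
  using random_variable_\<xi> by (intro borel_measurable_sum) auto

lemma AE_abs_sum_\<xi>_le_card:
  assumes "finite J" "J \<subseteq> {1..}"
  shows "AE \<omega> in M. \<bar>\<Sum>k\<in>J. \<xi> k \<omega>\<bar> \<le> card J"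
proof -
  have "AE \<omega> in M. \<forall>k\<in>J. \<bar>\<xi> k \<omega>\<bar> \<le> 1"
    using assms AE_abs_\<xi>_le_1 by (intro AE_finite_allI) auto
  then show ?thesis
  proof eventually_elim
    case (elim \<omega>)
    have "\<bar>\<Sum>k\<in>J. \<xi> k \<omega>\<bar> \<le> (\<Sum>k\<in>J. \<bar>\<xi> k \<omega>\<bar>)"
      by (rule sum_abs)
    also have "\<dots> \<le> card J"
      using sum_bounded_above[of J "\<lambda>k. \<bar>\<xi> k \<omega>\<bar>" 1] elim by simp
    finally show ?case .
  qed
qed

lemma integrable_sum_\<xi>_power:
  assumes "finite J" "J \<subseteq> {1..}"
  shows "integrable M (\<lambda>\<omega>. (\<Sum>k\<in>J. \<xi> k \<omega>) ^ a)"
  by (rule integrable_continuous_comp_bounded[OF random_variable_sum_\<xi> AE_abs_sum_\<xi>_le_card])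
    (use assms in \<open>auto intro: continuous_intros\<close>)

lemma expectation_sum_\<xi>:
  assumes "finite J" "J \<subseteq> {1..}"
  shows "expectation (\<lambda>\<omega>. \<Sum>k\<in>J. \<xi> k \<omega>) = card J * (p - q)"
proof -
  have "integrable M (\<xi> k)" if "k \<in> J" for k
    using integrable_sum_\<xi>_power[of "{k}" 1] that assms by auto
  then show ?thesis
    using assms expectation_\<xi>[of _ "\<lambda>x. x"] by (auto simp: subset_eq)
qed

lemma expectation_sum_\<xi>_sq:
  assumes "finite J" "J \<subseteq> {1..}"
  shows "expectation (\<lambda>\<omega>. (\<Sum>k\<in>J. \<xi> k \<omega>)^2)
    = card J * (p + q) + card J * (real (card J) - 1) * (p - q)^2"
proof (rule expectation_sum_square_indep[OF indep_vars_subset[OF indep_\<xi> assms(2)] assms(1)])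
  show "integrable M (\<lambda>\<omega>. \<xi> k \<omega> ^ 2)" if "k \<in> J" for k
    using integrable_sum_\<xi>_power[of "{k}" 2] that assms by auto
  show "expectation (\<xi> k) = p - q" if "k \<in> J" for k
    using expectation_\<xi>[of k "\<lambda>x. x"] that assms by auto
  show "expectation (\<lambda>\<omega>. \<xi> k \<omega> ^ 2) = p + q" if "k \<in> J" for k
    using expectation_\<xi>[of k "\<lambda>x. x ^ 2"] that assms by auto
qed

definition sign_mean :: "nat \<Rightarrow> 'a \<Rightarrow> real" where
  "sign_mean n \<omega> = (1 + (\<Sum>k=2..n. \<xi> k \<omega>)) / real n"

(* This holds also for n = 0, where both sides are 0 by division by zero. *)
lemma erw_sum_div_eq: "erw_sum X1 \<eta> n \<omega> / real n = X1 \<omega> * sign_mean n \<omega>"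
proof (cases "n = 0")
  case False
  then have "erw_sum X1 \<eta> n \<omega> = erw_step X1 \<eta> 1 \<omega> + (\<Sum>k=2..n. erw_step X1 \<eta> k \<omega>)"
    unfolding erw_sum_def by (simp add: sum.atLeast_Suc_atMost numeral_2_eq_2)
  also have "(\<Sum>k=2..n. erw_step X1 \<eta> k \<omega>) = (\<Sum>k=2..n. X1 \<omega> * \<xi> k \<omega>)"
    by (rule sum.cong) (auto simp: erw_step_def \<xi>_def)
  finally show ?thesis
    by (simp add: sign_mean_def erw_step_def sum_distrib_left algebra_simps)
qed (simp add: erw_sum_def sign_mean_def)

lemma random_variable_sign_mean [measurable]: "random_variable borel (sign_mean n)"
  unfolding sign_mean_def[abs_def] using random_variable_sum_\<xi>[of "{2..n}"] by simp

lemma AE_abs_sign_mean_le_1: "AE \<omega> in M. \<bar>sign_mean n \<omega>\<bar> \<le> 1"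
proof (cases "n = 0")
  case False
  have "AE \<omega> in M. \<bar>\<Sum>k=2..n. \<xi> k \<omega>\<bar> \<le> real n - 1"
    using AE_abs_sum_\<xi>_le_card[of "{2..n}"] False by (simp add: of_nat_diff)
  then show ?thesis
  proof eventually_elim
    case (elim \<omega>)
    then show ?case
      using False by (simp add: sign_mean_def divide_le_eq_1)
  qed
qed (simp add: sign_mean_def)

lemma integrable_sign_mean_power: "integrable M (\<lambda>\<omega>. sign_mean n \<omega> ^ a)"
  by (rule integrable_continuous_comp_bounded[OF random_variable_sign_mean AE_abs_sign_mean_le_1])
    (auto intro: continuous_intros)

lemma indep_X1_sign_mean: "indep_var borel X1 borel (sign_mean n)"
proof -
  have "indep_var borel (\<xi> 1) borel (\<lambda>\<omega>. \<Sum>k\<in>{2..n}. \<xi> k \<omega>)"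
    by (intro indep_vars_sum indep_vars_subset[OF indep_\<xi>]) auto
  then have "indep_var borel (id \<circ> \<xi> 1) borel ((\<lambda>t. (1 + t) / real n) \<circ> (\<lambda>\<omega>. \<Sum>k\<in>{2..n}. \<xi> k \<omega>))"
    by (rule indep_var_compose) auto
  moreover have "\<xi> 1 = X1"
    by (simp add: \<xi>_def)
  ultimately show ?thesis
    by (simp add: comp_def sign_mean_def[abs_def])
qed

lemma
  assumes "continuous_on UNIV g"
  shows integrable_X1_power_mult_sign_mean: "integrable M (\<lambda>\<omega>. X1 \<omega> ^ a * g (sign_mean n \<omega>))"
    and expectation_X1_power_mult_sign_mean: "expectation (\<lambda>\<omega>. X1 \<omega> ^ a * g (sign_mean n \<omega>))
      = expectation (\<lambda>\<omega>. X1 \<omega> ^ a) * expectation (\<lambda>\<omega>. g (sign_mean n \<omega>))"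
proof -
  have "indep_var borel ((\<lambda>x. x ^ a) \<circ> X1) borel (g \<circ> sign_mean n)"
    using borel_measurable_continuous_onI[OF assms] by (intro indep_var_compose[OF indep_X1_sign_mean]) auto
  moreover have "integrable M (\<lambda>\<omega>. X1 \<omega> ^ a)"
    by (rule integrable_continuous_comp_bounded[OF random_variable_X1 AE_abs_X1_le_1])
      (auto intro: continuous_intros)
  moreover have "integrable M (\<lambda>\<omega>. g (sign_mean n \<omega>))"
    by (rule integrable_continuous_comp_bounded[OF random_variable_sign_mean AE_abs_sign_mean_le_1 assms])
  ultimately show "integrable M (\<lambda>\<omega>. X1 \<omega> ^ a * g (sign_mean n \<omega>))"
    and "expectation (\<lambda>\<omega>. X1 \<omega> ^ a * g (sign_mean n \<omega>))
      = expectation (\<lambda>\<omega>. X1 \<omega> ^ a) * expectation (\<lambda>\<omega>. g (sign_mean n \<omega>))"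
    by (simp_all add: comp_def indep_var_integrable indep_var_lebesgue_integral)
qed

lemma expectation_sign_mean: "expectation (sign_mean n) = (1 + (real n - 1) * (p - q)) / real n"
proof (cases "n = 0")
  case False
  have "expectation (sign_mean n) = (1 + expectation (\<lambda>\<omega>. \<Sum>k=2..n. \<xi> k \<omega>)) / real n"
    using integrable_sum_\<xi>_power[of "{2..n}" 1] unfolding sign_mean_def[abs_def] by (simp add: prob_space)
  then show ?thesis
    using False expectation_sum_\<xi>[of "{2..n}"] by (simp add: of_nat_diff)
qed (simp add: sign_mean_def[abs_def])

lemma expectation_sign_mean_sq:
  "expectation (\<lambda>\<omega>. (sign_mean n \<omega>)^2) = (1 + 2 * (real n - 1) * (p - q) + (real n - 1) * (p + q)
     + (real n - 1) * (real n - 2) * (p - q)^2) / (real n)^2"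
proof (cases "n = 0")
  case False
  let ?T = "\<lambda>\<omega>. \<Sum>k=2..n. \<xi> k \<omega>"
  have "(\<lambda>\<omega>. (sign_mean n \<omega>)^2) = (\<lambda>\<omega>. (1 + 2 * ?T \<omega> + (?T \<omega>)^2) / (real n)^2)"
    by (simp add: sign_mean_def power_divide power2_eq_square algebra_simps)
  then have "expectation (\<lambda>\<omega>. (sign_mean n \<omega>)^2)
      = (1 + 2 * expectation ?T + expectation (\<lambda>\<omega>. (?T \<omega>)^2)) / (real n)^2"
    using integrable_sum_\<xi>_power[of "{2..n}" 1] integrable_sum_\<xi>_power[of "{2..n}" 2]
    by (simp add: prob_space)
  then show ?thesis
    using False expectation_sum_\<xi>[of "{2..n}"] expectation_sum_\<xi>_sq[of "{2..n}"]
    by (simp add: of_nat_diff)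
qed (simp add: sign_mean_def)

lemma tendsto_expectation_sign_mean: "(\<lambda>n. expectation (sign_mean n)) \<longlonglongrightarrow> p - q"
  unfolding expectation_sign_mean by real_asymp

lemma tendsto_expectation_sign_mean_sq: "(\<lambda>n. expectation (\<lambda>\<omega>. (sign_mean n \<omega>)^2)) \<longlonglongrightarrow> (p - q)^2"
  unfolding expectation_sign_mean_sq by real_asymp

lemma tendsto_expectation_erw_mean:
  "(\<lambda>n. expectation (\<lambda>\<omega>. erw_sum X1 \<eta> n \<omega> / real n)) \<longlonglongrightarrow> (p - q)^2"
proof -
  have "expectation (\<lambda>\<omega>. erw_sum X1 \<eta> n \<omega> / real n) = (p - q) * expectation (sign_mean n)" for n
    using expectation_X1_power_mult_sign_mean[OF continuous_on_id, of 1 n]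
    by (simp add: erw_sum_div_eq expectation_X1)
  moreover have "(\<lambda>n. (p - q) * expectation (sign_mean n)) \<longlonglongrightarrow> (p - q) * (p - q)"
    by (intro tendsto_intros tendsto_expectation_sign_mean)
  ultimately show ?thesis
    by (simp add: power2_eq_square)
qed

lemma tendsto_variance_erw_mean:
  "(\<lambda>n. variance (\<lambda>\<omega>. erw_sum X1 \<eta> n \<omega> / real n)) \<longlonglongrightarrow> (p - q)^2 * (p + q - (p - q)^2)"
proof -
  have continuous_square: "continuous_on UNIV (\<lambda>x::real. x ^ 2)"
    by (intro continuous_intros)
  have "variance (\<lambda>\<omega>. erw_sum X1 \<eta> n \<omega> / real n)
      = (p + q) * expectation (\<lambda>\<omega>. (sign_mean n \<omega>)^2) - ((p - q) * expectation (sign_mean n))^2" for n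
  proof -
    have "variance (\<lambda>\<omega>. X1 \<omega> * sign_mean n \<omega>)
        = expectation (\<lambda>\<omega>. X1 \<omega> ^ 2 * (sign_mean n \<omega>)^2) - (expectation (\<lambda>\<omega>. X1 \<omega> * sign_mean n \<omega>))^2"
      using integrable_X1_power_mult_sign_mean[OF continuous_on_id, of 1 n]
        integrable_X1_power_mult_sign_mean[OF continuous_square, of 2 n]
      by (subst variance_eq) (simp_all add: power_mult_distrib)
    then show ?thesis
      using expectation_X1_power_mult_sign_mean[OF continuous_on_id, of 1 n]
        expectation_X1_power_mult_sign_mean[OF continuous_square, of 2 n]
      by (simp add: erw_sum_div_eq expectation_X1 expectation_X1_sq)
  qed
  moreover have "(\<lambda>n. (p + q) * expectation (\<lambda>\<omega>. (sign_mean n \<omega>)^2) - ((p - q) * expectation (sign_mean n))^2)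
      \<longlonglongrightarrow> (p + q) * (p - q)^2 - ((p - q) * (p - q))^2"
    by (intro tendsto_intros tendsto_expectation_sign_mean tendsto_expectation_sign_mean_sq)
  moreover have "(p + q) * (p - q)^2 - ((p - q) * (p - q))^2 = (p - q)^2 * (p + q - (p - q)^2)"
    by (simp add: power2_eq_square algebra_simps)
  ultimately show ?thesis
    by simp
qed

lemma
  shows integrable_erw_mean_L2: "integrable M (\<lambda>\<omega>. (erw_sum X1 \<eta> n \<omega> / real n - (p - q) * X1 \<omega>)^2)"
    and tendsto_erw_mean_L2: "(\<lambda>n. expectation (\<lambda>\<omega>. (erw_sum X1 \<eta> n \<omega> / real n - (p - q) * X1 \<omega>)^2)) \<longlonglongrightarrow> 0"
proof -
  have eq: "(\<lambda>\<omega>. (erw_sum X1 \<eta> n \<omega> / real n - (p - q) * X1 \<omega>)^2)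
      = (\<lambda>\<omega>. X1 \<omega> ^ 2 * (sign_mean n \<omega> - (p - q))^2)" for n
    by (simp add: erw_sum_div_eq fun_eq_iff power2_eq_square algebra_simps)
  have continuous: "continuous_on UNIV (\<lambda>x. (x - (p - q))^2)"
    by (intro continuous_intros)
  show "integrable M (\<lambda>\<omega>. (erw_sum X1 \<eta> n \<omega> / real n - (p - q) * X1 \<omega>)^2)"
    unfolding eq by (rule integrable_X1_power_mult_sign_mean[OF continuous])
  have expectation_eq: "expectation (\<lambda>\<omega>. (erw_sum X1 \<eta> n \<omega> / real n - (p - q) * X1 \<omega>)^2)
      = (p + q) * (expectation (\<lambda>\<omega>. (sign_mean n \<omega>)^2) - 2 * (p - q) * expectation (sign_mean n) + (p - q)^2)"
    for n
  proof -
    have "(\<lambda>\<omega>. (sign_mean n \<omega> - (p - q))^2)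
        = (\<lambda>\<omega>. (sign_mean n \<omega>)^2 - 2 * (p - q) * sign_mean n \<omega> + (p - q)^2)"
      by (simp add: fun_eq_iff power2_diff)
    then show ?thesis
      using integrable_sign_mean_power[of n 1] integrable_sign_mean_power[of n 2]
      unfolding eq expectation_X1_power_mult_sign_mean[OF continuous] expectation_X1_sq
      by (simp add: prob_space)
  qed
  have "(\<lambda>n. (p + q) * (expectation (\<lambda>\<omega>. (sign_mean n \<omega>)^2) - 2 * (p - q) * expectation (sign_mean n)
      + (p - q)^2)) \<longlonglongrightarrow> (p + q) * ((p - q)^2 - 2 * (p - q) * (p - q) + (p - q)^2)"
    by (intro tendsto_intros tendsto_expectation_sign_mean tendsto_expectation_sign_mean_sq)
  also have "(p + q) * ((p - q)^2 - 2 * (p - q) * (p - q) + (p - q)^2) = 0"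
    by (simp add: power2_eq_square)
  finally show "(\<lambda>n. expectation (\<lambda>\<omega>. (erw_sum X1 \<eta> n \<omega> / real n - (p - q) * X1 \<omega>)^2)) \<longlonglongrightarrow> 0"
    unfolding expectation_eq .
qed

lemma weak_conv_erw_mean:
  "weak_conv_m (\<lambda>n. distr M borel (\<lambda>\<omega>. erw_sum X1 \<eta> n \<omega> / real n)) (distr M borel (\<lambda>\<omega>. (p - q) * X1 \<omega>))"
  by (rule L2_conv_imp_weak_conv[OF _ _ integrable_erw_mean_L2 tendsto_erw_mean_L2])
    (simp_all add: erw_sum_div_eq)

lemma weights_nonneg: "0 \<le> p" "0 \<le> q" "0 \<le> r"
  using X1_law measure_nonneg by metis+

lemma distr_scaled_X1: "distr M borel (\<lambda>\<omega>. (p - q) * X1 \<omega>) = erw_limit_law p q r"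
proof (rule measure_eqI)
  show "sets (distr M borel (\<lambda>\<omega>. (p - q) * X1 \<omega>)) = sets (erw_limit_law p q r)"
    by (simp add: erw_limit_law_def)
  fix A
  assume "A \<in> sets (distr M borel (\<lambda>\<omega>. (p - q) * X1 \<omega>))"
  then have [measurable]: "A \<in> sets borel"
    by simp
  let ?w = "indicator A (p - q) * p + indicator A (- (p - q)) * q + indicator A 0 * r :: real"
  have "expectation (\<lambda>\<omega>. indicator A ((p - q) * X1 \<omega>) :: real)
      = expectation (indicator ((\<lambda>\<omega>. (p - q) * X1 \<omega>) -` A \<inter> space M))"
    by (rule Bochner_Integration.integral_cong) (auto simp: indicator_def)
  then have "prob ((\<lambda>\<omega>. (p - q) * X1 \<omega>) -` A \<inter> space M) = ?w"
    using expectation_\<xi>[of 1 "\<lambda>x. indicator A ((p - q) * x)"] by (simp add: \<xi>_def Int_absorb2)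
  then have "emeasure (distr M borel (\<lambda>\<omega>. (p - q) * X1 \<omega>)) A = ?w"
    by (simp add: emeasure_distr emeasure_eq_measure)
  moreover have "emeasure (erw_limit_law p q r) A = ?w"
  proof -
    have "pmf_of_list_wf [(p - q, p), (0, r), (- (p - q), q)]"
      using weights_sum weights_nonneg by (auto simp: pmf_of_list_wf_def)
    then show ?thesis
      by (simp add: erw_limit_law_def emeasure_distr emeasure_pmf_of_list indicator_def ac_simps)
  qed
  ultimately show "emeasure (distr M borel (\<lambda>\<omega>. (p - q) * X1 \<omega>)) A = emeasure (erw_limit_law p q r) A"
    by simp
qed

end

theorem theorem5p2:
  fixes M :: "'a measure" and X1 :: "'a \<Rightarrow> real" and \<eta> :: "nat \<Rightarrow> 'a \<Rightarrow> real"
    and p q r :: real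
  assumes "prob_space M"
    and "p \<in> {0<..<1}" and "q \<in> {0<..<1}" and "r \<in> {0<..<1}" and "p + q + r = 1"
    and "prob_space.indep_vars M (\<lambda>_. borel) (\<lambda>i. if i = 1 then X1 else \<eta> i) {1..}"
    and "measure M {\<omega> \<in> space M. X1 \<omega> = 1} = p"
    and "measure M {\<omega> \<in> space M. X1 \<omega> = -1} = q"
    and "measure M {\<omega> \<in> space M. X1 \<omega> = 0} = r"
    and "\<And>n. n \<ge> 2 \<Longrightarrow> measure M {\<omega> \<in> space M. \<eta> n \<omega> = 1} = p"
    and "\<And>n. n \<ge> 2 \<Longrightarrow> measure M {\<omega> \<in> space M. \<eta> n \<omega> = -1} = q"
    and "\<And>n. n \<ge> 2 \<Longrightarrow> measure M {\<omega> \<in> space M. \<eta> n \<omega> = 0} = r"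
  shows "weak_conv_m (\<lambda>n. distr M borel (\<lambda>\<omega>. erw_sum X1 \<eta> n \<omega> / real n)) (erw_limit_law p q r)
    \<and> (\<lambda>n. prob_space.expectation M (\<lambda>\<omega>. erw_sum X1 \<eta> n \<omega> / real n)) \<longlonglongrightarrow> (p - q)^2
    \<and> (\<lambda>n. prob_space.variance M (\<lambda>\<omega>. erw_sum X1 \<eta> n \<omega> / real n))
           \<longlonglongrightarrow> (p - q)^2 * (p + q - (p - q)^2)"
proof -
  interpret erw_first_step M X1 \<eta> p q r
    using assms by (simp add: erw_first_step_def erw_first_step_axioms_def)
  show ?thesis
    using weak_conv_erw_mean tendsto_expectation_erw_mean tendsto_variance_erw_mean
    by (simp add: distr_scaled_X1)
qed

end
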